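(* Let $X,Y,Z$ be topological spaces and $f:X\times Y\to Z$ a mapping. Suppose that for each $x\in X$, $f_x$ is quasicontinuous and there is a dense set $D_x\subset Y$ such that $f^y$ is quasicontinuous at $x$ for every $y\in D_x$. Then $f$ is lower $X$-quasicontinuous (at every point of $X\times Y$); equivalently, for every nonempty open $V\subset Y$ the set-valued mapping $X\ni x\mapsto f_x(V)\in 2^Z$ is lower quasicontinuous.
   Context: $f_x:Y\to Z$ and $f^y:X\to Z$ are given by $f_x(y)=f^y(x)=f(x,y)$; $2^Z$ is the set of nonempty subsets of $Z$. A mapping $g:X\to Z$ is quasicontinuous at $a$ if for each neighborhood $U$ of $a$ and each neighborhood $W$ of $g(a)$ there is an open $O$ with $\emptyset\neq O\subset U$ and $g(O)\subset W$; $g$ is quasicontinuous if it is so at every point. A set-valued $F:X\to 2^Z$ is lower quasicontinuous if for each $x_0\in X$, each neighborhood $U$ of $x_0$ and each open $W\subset Z$ with $F(x_0)\cap W\ne\emptyset$, there is an open $O$ with $\emptyset\ne O\subset U$ and $F(x)\cap W\ne\emptyset$ for all $x\in O$. $f$ is lower $X$-quasicontinuous at $(a,b)$ if for each neighborhood $U$ of $a$, $V$ of $b$, $W$ of $f(a,b)$, there is an open $O\subset X$ with $\emptyset\ne O\subset U$ and $f(\{x\}\times V)\cap W\ne\emptyset$ for all $x\in O$. *)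

theory Defs
  imports "HOL-Analysis.Analysis"
begin

(* Neighborhoods are taken to be open sets containing the point; since all
   notions below are monotone in the neighborhoods, this is equivalent to
   arbitrary neighborhoods. *)

definition quasicont_at :: "('a::topological_space \<Rightarrow> 'b::topological_space) \<Rightarrow> 'a \<Rightarrow> bool" where
  "quasicont_at g a \<longleftrightarrow>
     (\<forall>U W. open U \<longrightarrow> a \<in> U \<longrightarrow> open W \<longrightarrow> g a \<in> W \<longrightarrow>
        (\<exists>G. open G \<and> G \<noteq> {} \<and> G \<subseteq> U \<and> g ` G \<subseteq> W))"

definition quasicont :: "('a::topological_space \<Rightarrow> 'b::topological_space) \<Rightarrow> bool" where
  "quasicont g \<longleftrightarrow> (\<forall>a. quasicont_at g a)"

definition lower_quasicont :: "('a::topological_space \<Rightarrow> 'b::topological_space set) \<Rightarrow> bool" where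
  "lower_quasicont F \<longleftrightarrow>
     (\<forall>x0 U W. open U \<longrightarrow> x0 \<in> U \<longrightarrow> open W \<longrightarrow> F x0 \<inter> W \<noteq> {} \<longrightarrow>
        (\<exists>G. open G \<and> G \<noteq> {} \<and> G \<subseteq> U \<and> (\<forall>x\<in>G. F x \<inter> W \<noteq> {})))"

definition lower_X_quasicont_at ::
  "('a::topological_space \<Rightarrow> 'b::topological_space \<Rightarrow> 'c::topological_space) \<Rightarrow> 'a \<Rightarrow> 'b \<Rightarrow> bool" where
  "lower_X_quasicont_at f a b \<longleftrightarrow>
     (\<forall>U V W. open U \<longrightarrow> a \<in> U \<longrightarrow> open V \<longrightarrow> b \<in> V \<longrightarrow> open W \<longrightarrow> f a b \<in> W \<longrightarrow>
        (\<exists>G. open G \<and> G \<noteq> {} \<and> G \<subseteq> U \<and> (\<forall>x\<in>G. f x ` V \<inter> W \<noteq> {})))"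

end

theory Submission
  imports Defs
begin

(* Fix (a,b) and open sets U \<ni> a, V \<ni> b, W \<ni> f a b.  Quasicontinuity
   of the section f_a at b yields a nonempty open G \<subseteq> V with f_a(G) \<subseteq> W.  The
   dense set D_a meets G in some point y; then f a y \<in> W and f^y is quasicontinuous
   at a, so there is a nonempty open Q \<subseteq> U with f x y \<in> W for all x \<in> Q.  Since
   y \<in> V, every x \<in> Q satisfies f_x(V) \<inter> W \<noteq> {}: this is lower X-quasicontinuity. *)

lemma lower_X_quasicont_at_from_sections:
  fixes f :: "'a::topological_space \<Rightarrow> 'b::topological_space \<Rightarrow> 'c::topological_space"
  assumes section_qc: "quasicont_at (f a) b"
    and D_dense: "closure D = UNIV"
    and D_qc: "\<And>y. y \<in> D \<Longrightarrow> quasicont_at (\<lambda>x. f x y) a"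
  shows "lower_X_quasicont_at f a b"
  unfolding lower_X_quasicont_at_def
proof (intro allI impI)
  fix U V W
  assume U: "open U" "a \<in> U" and V: "open V" "b \<in> V" and W: "open W" "f a b \<in> W"
  obtain G where G: "open G" "G \<noteq> {}" "G \<subseteq> V" "f a ` G \<subseteq> W"
    using section_qc U V W unfolding quasicont_at_def by meson
  have "G \<inter> D \<noteq> {}"
    using open_Int_closure_eq_empty[OF G(1), of D] D_dense G(2) by simp
  then obtain y where y: "y \<in> D" "y \<in> G" by blast
  have "f a y \<in> W" using G(4) y(2) by blast
  then obtain Q where Q: "open Q" "Q \<noteq> {}" "Q \<subseteq> U" "(\<lambda>x. f x y) ` Q \<subseteq> W"
    using D_qc[OF y(1)] U W(1) unfolding quasicont_at_def by meson
  have "f x ` V \<inter> W \<noteq> {}" if "x \<in> Q" for x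
    using that Q(4) y(2) G(3) by blast
  with Q(1-3) show "\<exists>G. open G \<and> G \<noteq> {} \<and> G \<subseteq> U \<and> (\<forall>x\<in>G. f x ` V \<inter> W \<noteq> {})"
    by blast
qed

lemma lower_quasicont_image_of_lower_X_quasicont:
  fixes f :: "'a::topological_space \<Rightarrow> 'b::topological_space \<Rightarrow> 'c::topological_space"
  assumes lower_X: "\<And>a b. lower_X_quasicont_at f a b"
    and V: "open V"
  shows "lower_quasicont (\<lambda>x. f x ` V)"
  unfolding lower_quasicont_def
proof (intro allI impI)
  fix x0 U W
  assume U: "open U" "x0 \<in> U" and W: "open W" and meets: "f x0 ` V \<inter> W \<noteq> {}"
  then obtain v where v: "v \<in> V" "f x0 v \<in> W" by blast
  show "\<exists>G. open G \<and> G \<noteq> {} \<and> G \<subseteq> U \<and> (\<forall>x\<in>G. f x ` V \<inter> W \<noteq> {})"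
    using lower_X[of x0 v] U V W v unfolding lower_X_quasicont_at_def by blast
qed

theorem corollary2p4:
  fixes f :: "'a::topological_space \<Rightarrow> 'b::topological_space \<Rightarrow> 'c::topological_space"
  assumes sect: "\<And>x. quasicont (\<lambda>y. f x y)"
    and dense: "\<And>x. \<exists>D. closure D = UNIV \<and> (\<forall>y\<in>D. quasicont_at (\<lambda>x'. f x' y) x)"
  shows "(\<forall>a b. lower_X_quasicont_at f a b)
       \<and> (\<forall>V. open V \<and> V \<noteq> {} \<longrightarrow> lower_quasicont (\<lambda>x. f x ` V))"
proof -
  have lower_X: "lower_X_quasicont_at f a b" for a b
  proof -
    obtain D where "closure D = UNIV" "\<forall>y\<in>D. quasicont_at (\<lambda>x. f x y) a"
      using dense by blast
    moreover have "quasicont_at (f a) b"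
      using sect[of a] unfolding quasicont_def by simp
    ultimately show ?thesis
      by (intro lower_X_quasicont_at_from_sections) auto
  qed
  then show ?thesis
    using lower_quasicont_image_of_lower_X_quasicont by blast
qed

end
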